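(* Let $X$ be a metric continuum with metric $\rho\le 1$, and let $a,b,c\subset X$ be nonempty closed sets with $a\cap b\cap c=\emptyset$. Define $f:X\to\mathbb{R}^3$ by $f(p)=(\kappa_a(p),\kappa_b(p),\kappa_c(p))$ with $\kappa_a(p)=\rho(p,a)/(\rho(p,a)+\rho(p,b)+\rho(p,c))$ and $\kappa_b,\kappa_c$ analogous. Let $T=\{(t_1,t_2,t_3):t_i\ge0,\ t_1+t_2+t_3=1\}$, $\partial T$ its boundary (relative to the plane $t_1+t_2+t_3=1$), and $h:\partial T\times[0,1]\to T$, $h(v,t)=(1-t)v+t(\tfrac13,\tfrac13,\tfrac13)$. Let $X'=\{(p,v,t)\in X\times\partial T\times[0,1]: h(v,t)=f(p)\}$ and $q:X'\to X$, $q(p,v,t)=p$. Let $A$, $B$, $C$ be the sides of $T$ opposite to $(1,0,0)$, $(0,1,0)$, $(0,0,1)$ respectively, and put $x=X'\cap(X\times A\times[0,1])$, $y=X'\cap(X\times B\times[0,1])$, $z=X'\cap(X\times C\times[0,1])$. Then $X'$ is a metric continuum, $q$ is a continuous closed monotone surjection (all fibres are connected), and $q^{-1}(a)\subset x$, $q^{-1}(b)\subset y$, $q^{-1}(c)\subset z$, $x\cap y\cap z=\emptyset$ and $x\cup y\cup z=X'$.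
   Context: A metric continuum is a compact connected metric space. $\rho(p,a)$ denotes the distance from the point $p$ to the set $a$. A map is monotone if all its point-inverses are connected. *)

theory Defs
  imports "HOL-Analysis.Analysis"
begin

definition kappa :: "'a::metric_space set \<Rightarrow> 'a set \<Rightarrow> 'a set \<Rightarrow> 'a set \<Rightarrow> 'a \<Rightarrow> real" where
  "kappa d a b c p = infdist p d / (infdist p a + infdist p b + infdist p c)"

definition fmap :: "'a::metric_space set \<Rightarrow> 'a set \<Rightarrow> 'a set \<Rightarrow> 'a \<Rightarrow> real \<times> real \<times> real" where
  "fmap a b c p = (kappa a a b c p, kappa b a b c p, kappa c a b c p)"

definition simplexT :: "(real \<times> real \<times> real) set" where
  "simplexT = {(t1, t2, t3). t1 \<ge> 0 \<and> t2 \<ge> 0 \<and> t3 \<ge> 0 \<and> t1 + t2 + t3 = 1}"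

definition hmap :: "real \<times> real \<times> real \<Rightarrow> real \<Rightarrow> real \<times> real \<times> real" where
  "hmap v t = (1 - t) *\<^sub>R v + t *\<^sub>R (1/3, 1/3, 1/3)"

definition Xprime :: "'a::metric_space set \<Rightarrow> 'a set \<Rightarrow> 'a set \<Rightarrow> 'a set
    \<Rightarrow> ('a \<times> (real \<times> real \<times> real) \<times> real) set" where
  "Xprime X a b c = {(p, v, t). p \<in> X \<and> v \<in> rel_frontier simplexT \<and> t \<in> {0..1}
       \<and> hmap v t = fmap a b c p}"

definition sideA :: "(real \<times> real \<times> real) set" where
  "sideA = closed_segment (0, 1, 0) (0, 0, 1)"
definition sideB :: "(real \<times> real \<times> real) set" where
  "sideB = closed_segment (1, 0, 0) (0, 0, 1)"
definition sideC :: "(real \<times> real \<times> real) set" where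
  "sideC = closed_segment (1, 0, 0) (0, 1, 0)"

end

theory Submission
  imports Defs
begin

(* Since a, b, c are closed and have no common point, the denominator of kappa never vanishes,
   so f is a continuous map into T. The map h is radial projection onto the boundary from the
   centre: a point u of T other than the centre has the single preimage with t = 3 min u_i,
   while the preimage of the centre is the circle (boundary of T) x {1}. Hence every fibre of q
   is a point or a circle; X' is compact as a closed subset of X x (boundary of T) x [0,1], so q
   is a closed map, and a closed monotone map onto the connected X has connected domain.
   Over a the coordinate kappa_a vanishes, which forces t = 0 and v in A; similarly for b, c. *)

lemma simplexT_eq_convex_hull: "simplexT = convex hull {(1,0,0), (0,1,0), (0,0,1)}"
  unfolding convex_hull_3 simplexT_def by force

lemma simplexT_eq_orthant_Int_plane:
  "simplexT = {x. 0 \<le> (1,0,0) \<bullet> x} \<inter> {x. 0 \<le> (0,1,0) \<bullet> x} \<inter> {x. 0 \<le> (0,0,1) \<bullet> x}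
     \<inter> {x. (1,1,1) \<bullet> x = 1}"
  by (auto simp: simplexT_def)

lemma rel_interior_simplexT:
  "rel_interior simplexT = {(t1, t2, t3). 0 < t1 \<and> 0 < t2 \<and> 0 < t3 \<and> t1 + t2 + t3 = 1}"
proof -
  let ?Q = "{x. 0 \<le> (1,0,0) \<bullet> x} \<inter> {x. 0 \<le> (0,1,0) \<bullet> x} \<inter> {x::real\<times>real\<times>real. 0 \<le> (0,0,1) \<bullet> x}"
  let ?P = "{x::real\<times>real\<times>real. (1,1,1) \<bullet> x = 1}"
  have int_Q: "interior ?Q = {x. 0 < (1,0,0) \<bullet> x} \<inter> {x. 0 < (0,1,0) \<bullet> x} \<inter> {x. 0 < (0,0,1) \<bullet> x}"
    by (simp add: interior_Int zero_prod_def)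
  have "rel_interior (?Q \<inter> ?P) = interior ?Q \<inter> ?P"
  proof (rule rel_interior_convex_Int_affine)
    show "convex ?Q" by (intro convex_Int convex_halfspace_ge)
    show "affine ?P" by (rule affine_hyperplane)
    have "(1/3, 1/3, 1/3) \<in> interior ?Q \<inter> ?P"
      unfolding int_Q by simp
    then show "interior ?Q \<inter> ?P \<noteq> {}" by blast
  qed
  moreover have "interior ?Q \<inter> ?P = {(t1, t2, t3). 0 < t1 \<and> 0 < t2 \<and> 0 < t3 \<and> t1 + t2 + t3 = 1}"
    unfolding int_Q by auto
  ultimately show ?thesis
    by (simp only: simplexT_eq_orthant_Int_plane)
qed

lemma compact_simplexT: "compact simplexT"
  unfolding simplexT_eq_convex_hull by (intro compact_convex_hull finite_imp_compact) simp

lemma rel_frontier_simplexT: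
  "rel_frontier simplexT = {(t1, t2, t3). (t1, t2, t3) \<in> simplexT \<and> (t1 = 0 \<or> t2 = 0 \<or> t3 = 0)}"
  unfolding rel_frontier_def rel_interior_simplexT closure_closed[OF compact_imp_closed[OF compact_simplexT]]
  by (auto simp: simplexT_def)

lemma Basis_real_triple: "(Basis :: (real \<times> real \<times> real) set) = {(1,0,0), (0,1,0), (0,0,1)}"
  by (auto simp: Basis_prod_def zero_prod_def)

lemma sideA_eq: "sideA = {x \<in> simplexT. (1,0,0) \<bullet> x = 0}"
  unfolding sideA_def closed_segment_def by (auto simp: simplexT_def)

lemma sideB_eq: "sideB = {x \<in> simplexT. (0,1,0) \<bullet> x = 0}"
  unfolding sideB_def closed_segment_def by (auto simp: simplexT_def)

lemma sideC_eq: "sideC = {x \<in> simplexT. (0,0,1) \<bullet> x = 0}"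
  unfolding sideC_def closed_segment_def by (auto simp: simplexT_def)

lemma rel_frontier_simplexT_eq_sides: "rel_frontier simplexT = sideA \<union> sideB \<union> sideC"
  unfolding rel_frontier_simplexT sideA_eq sideB_eq sideC_eq by auto

lemma sides_Int_empty: "sideA \<inter> sideB \<inter> sideC = {}"
  unfolding sideA_eq sideB_eq sideC_eq by (auto simp: simplexT_def)

lemma compact_rel_frontier_simplexT: "compact (rel_frontier simplexT)"
  by (intro compact_rel_frontier_bounded compact_imp_bounded compact_simplexT)

lemma connected_rel_frontier_simplexT: "connected (rel_frontier simplexT)"
proof -
  have "connected sideA" "connected sideB" "connected sideC"
    unfolding sideA_def sideB_def sideC_def by (rule connected_segment)+
  moreover have "(0,0,1) \<in> sideA \<inter> sideB" "(1,0,0) \<in> sideB \<inter> sideC"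
    unfolding sideA_def sideB_def sideC_def by simp_all
  ultimately show ?thesis
    unfolding rel_frontier_simplexT_eq_sides by (metis Int_iff Un_iff connected_Un empty_iff)
qed

lemma rel_frontier_simplexT_subset: "rel_frontier simplexT \<subseteq> simplexT"
  by (auto simp: rel_frontier_simplexT)

lemma hmap_eq: "hmap (v1, v2, v3) t = ((1 - t) * v1 + t/3, (1 - t) * v2 + t/3, (1 - t) * v3 + t/3)"
  by (simp add: hmap_def)

lemma hmap_min_coordinate:
  assumes "v \<in> rel_frontier simplexT" "t \<le> 1" "hmap v t = (u1, u2, u3)"
  shows "t = 3 * min u1 (min u2 u3)"
proof -
  obtain v1 v2 v3 where v: "v = (v1, v2, v3)" by (cases v)
  have u: "u1 = (1 - t) * v1 + t/3" "u2 = (1 - t) * v2 + t/3" "u3 = (1 - t) * v3 + t/3"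
    using assms(3) by (auto simp: v hmap_eq)
  have "v \<in> simplexT"
    using assms(1) rel_frontier_simplexT_subset by blast
  then have "0 \<le> (1 - t) * v1" "0 \<le> (1 - t) * v2" "0 \<le> (1 - t) * v3"
    using assms(2) by (auto simp: v simplexT_def)
  moreover have "v1 = 0 \<or> v2 = 0 \<or> v3 = 0"
    using assms(1) by (auto simp: v rel_frontier_simplexT)
  ultimately have "t/3 \<le> u1" "t/3 \<le> u2" "t/3 \<le> u3" "u1 = t/3 \<or> u2 = t/3 \<or> u3 = t/3"
    by (auto simp: u)
  then show ?thesis
    by (auto simp: min_def)
qed

lemma hmap_fibre_centre:
  "{(v, t) \<in> rel_frontier simplexT \<times> {0..1}. hmap v t = (1/3, 1/3, 1/3)} = rel_frontier simplexT \<times> {1}"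
  using hmap_min_coordinate by (fastforce simp: hmap_def)

lemma hmap_fibre_subsingleton:
  assumes "u \<noteq> (1/3, 1/3, 1/3)"
    and "w \<in> {(v, t) \<in> rel_frontier simplexT \<times> {0..1}. hmap v t = u}"
    and "w' \<in> {(v, t) \<in> rel_frontier simplexT \<times> {0..1}. hmap v t = u}"
  shows "w = w'"
proof -
  obtain v t v' t' where w: "w = (v, t)" and w': "w' = (v', t')" by (cases w, cases w')
  obtain u1 u2 u3 where u: "u = (u1, u2, u3)" by (cases u)
  have "v \<in> rel_frontier simplexT" "t \<le> 1" "hmap v t = (u1, u2, u3)"
    and "v' \<in> rel_frontier simplexT" "t' \<le> 1" "hmap v' t' = (u1, u2, u3)"
    using assms(2,3) by (auto simp: w w' u)
  then have "t = t'"
    using hmap_min_coordinate by metis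
  moreover have "t \<noteq> 1"
    using assms by (auto simp: w hmap_def)
  moreover have "hmap v t = hmap v' t'"
    using assms(2,3) by (simp add: w w')
  ultimately show ?thesis
    by (simp add: w w' hmap_def)
qed

lemma connected_hmap_fibre:
  "connected {(v, t) \<in> rel_frontier simplexT \<times> {0..1}. hmap v t = u}"
proof (cases "u = (1/3, 1/3, 1/3)")
  case True
  then show ?thesis
    unfolding True hmap_fibre_centre
    by (intro connected_Times connected_rel_frontier_simplexT connected_sing)
next
  case False
  then show ?thesis
    using hmap_fibre_subsingleton[OF False] connected_sing
    by (metis (no_types, lifting) connected_empty equals0I insertI1 subset_singletonD subsetI)
qed

lemma hmap_surj_simplexT:
  assumes "u \<in> simplexT"
  obtains v t where "v \<in> rel_frontier simplexT" "t \<in> {0..1}" "hmap v t = u"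
proof (cases "u = (1/3, 1/3, 1/3)")
  case True
  have "(1, 0, 0) \<in> rel_frontier simplexT"
    unfolding rel_frontier_simplexT by (simp add: simplexT_def)
  with True show ?thesis
    by (intro that[of "(1, 0, 0)" 1]) (simp_all add: hmap_def)
next
  case False
  obtain u1 u2 u3 where u: "u = (u1, u2, u3)" by (cases u)
  have us: "0 \<le> u1" "0 \<le> u2" "0 \<le> u3" "u1 + u2 + u3 = 1"
    using assms by (auto simp: u simplexT_def)
  define m where "m = min u1 (min u2 u3)"
  have m: "0 \<le> m" "m \<le> u1" "m \<le> u2" "m \<le> u3" "m = u1 \<or> m = u2 \<or> m = u3"
    using us by (auto simp: m_def)
  have "m < 1/3"
    using False m us by (auto simp: u)
  define t where "t = 3 * m"
  have t: "t \<in> {0..1}" "0 < 1 - t"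
    using m \<open>m < 1/3\<close> by (auto simp: t_def)
  define v where "v = ((u1 - m) / (1 - t), (u2 - m) / (1 - t), (u3 - m) / (1 - t))"
  have "(u1 - m) / (1 - t) + (u2 - m) / (1 - t) + (u3 - m) / (1 - t) = (u1 + u2 + u3 - t) / (1 - t)"
    by (simp add: t_def add_divide_distrib diff_divide_distrib)
  also have "\<dots> = 1"
    using us t by simp
  finally have "v \<in> rel_frontier simplexT"
    unfolding rel_frontier_simplexT using m t by (auto simp: v_def simplexT_def)
  moreover have "hmap v t = u"
    using t by (simp add: v_def hmap_eq u t_def)
  ultimately show ?thesis
    using t that by blast
qed

lemma inner_Basis_hmap_eq_0:
  assumes "v \<in> simplexT" "t \<in> {0..1}" "e \<in> Basis" "e \<bullet> hmap v t = 0"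
  shows "e \<bullet> v = 0"
proof -
  have inner_hmap: "e \<bullet> hmap v t = (1 - t) * (e \<bullet> v) + t/3"
    using assms(3) by (auto simp: hmap_def inner_add_right Basis_real_triple)
  moreover have "0 \<le> e \<bullet> v"
    using assms(1,3) by (auto simp: simplexT_def Basis_real_triple)
  then have "0 \<le> (1 - t) * (e \<bullet> v)"
    using assms(2) by simp
  ultimately have "t = 0"
    using assms(2,4) by simp
  then show ?thesis
    using inner_hmap assms(4) by simp
qed

lemma infdist_sum_pos:
  assumes "closed a" "closed b" "closed c" "a \<noteq> {}" "b \<noteq> {}" "c \<noteq> {}" "a \<inter> b \<inter> c = {}"
  shows "0 < infdist p a + infdist p b + infdist p c"
proof (rule ccontr)
  assume "\<not> ?thesis"
  then have "infdist p a = 0" "infdist p b = 0" "infdist p c = 0"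
    using infdist_nonneg[of p] by (smt (verit))+
  then have "p \<in> a \<inter> b \<inter> c"
    using assms in_closed_iff_infdist_zero by blast
  with assms(7) show False by blast
qed

lemma fmap_in_simplexT:
  assumes "0 < infdist p a + infdist p b + infdist p c"
  shows "fmap a b c p \<in> simplexT"
proof -
  let ?D = "infdist p a + infdist p b + infdist p c"
  have "infdist p a / ?D + infdist p b / ?D + infdist p c / ?D = 1"
    using assms by (simp flip: add_divide_distrib)
  then show ?thesis
    by (simp add: fmap_def kappa_def simplexT_def infdist_nonneg)
qed

lemma continuous_on_fmap:
  assumes "\<And>p. p \<in> S \<Longrightarrow> 0 < infdist p a + infdist p b + infdist p c"
  shows "continuous_on S (fmap a b c)"
  unfolding fmap_def kappa_def
  using assms by (intro continuous_intros) (auto dest: less_imp_neq[symmetric])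

lemma Xprime_eq:
  "Xprime X a b c = (X \<times> rel_frontier simplexT \<times> {0..1}) \<inter> {(p, v, t). hmap v t = fmap a b c p}"
  by (auto simp: Xprime_def)

lemma compact_Xprime:
  assumes "compact X" "continuous_on UNIV (fmap a b c)"
  shows "compact (Xprime X a b c)"
proof -
  have "closed {(p, v, t). hmap v t = fmap a b c p}"
    unfolding case_prod_beta hmap_def
    by (intro closed_Collect_eq continuous_intros continuous_on_compose2[OF assms(2)]) auto
  then show ?thesis
    unfolding Xprime_eq
    by (intro compact_Int_closed compact_Times assms(1) compact_rel_frontier_simplexT compact_Icc)
qed

lemma Xprime_fst_fibre:
  assumes "p \<in> X"
  shows "{w \<in> Xprime X a b c. fst w = p}
    = {p} \<times> {(v, t) \<in> rel_frontier simplexT \<times> {0..1}. hmap v t = fmap a b c p}"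
  using assms by (auto simp: Xprime_def)

lemma connected_Xprime_fst_fibre:
  assumes "p \<in> X"
  shows "connected {w \<in> Xprime X a b c. fst w = p}"
  unfolding Xprime_fst_fibre[OF assms]
  by (intro connected_Times connected_sing connected_hmap_fibre)

lemma fst_image_Xprime:
  assumes "\<And>p. p \<in> X \<Longrightarrow> fmap a b c p \<in> simplexT"
  shows "fst ` Xprime X a b c = X"
proof
  show "fst ` Xprime X a b c \<subseteq> X"
    by (auto simp: Xprime_def)
  show "X \<subseteq> fst ` Xprime X a b c"
  proof
    fix p assume "p \<in> X"
    then obtain v t where "v \<in> rel_frontier simplexT" "t \<in> {0..1}" "hmap v t = fmap a b c p"
      using assms hmap_surj_simplexT by metis
    with \<open>p \<in> X\<close> have "(p, v, t) \<in> Xprime X a b c"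
      by (simp add: Xprime_def)
    then show "p \<in> fst ` Xprime X a b c"
      by force
  qed
qed

lemma closed_map_fst_compact:
  fixes S :: "('a::t2_space \<times> 'b::t2_space) set"
  assumes "compact S" "fst ` S = T"
  shows "closed_map (top_of_set S) (top_of_set T) fst"
  unfolding closed_map_def
  using Abstract_Topology_2.continuous_imp_closed_map[OF _ continuous_on_fst[OF continuous_on_id] assms(2,1)]
  by simp

lemma connected_Xprime:
  assumes "connected X" "compact X" "continuous_on UNIV (fmap a b c)"
    and "\<And>p. p \<in> X \<Longrightarrow> fmap a b c p \<in> simplexT"
  shows "connected (Xprime X a b c)"
proof -
  let ?X' = "Xprime X a b c"
  have "connected (?X' \<inter> fst -` X)"
  proof (rule connected_closed_monotone_preimage)
    show "continuous_on ?X' fst"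
      by (rule continuous_on_fst[OF continuous_on_id])
    show "fst ` ?X' = X"
      using assms(4) by (rule fst_image_Xprime)
    then show "closedin (top_of_set X) (fst ` C)" if "closedin (top_of_set ?X') C" for C
      using closed_map_fst_compact[OF compact_Xprime[OF assms(2,3)]] that
      by (simp add: closed_map_def)
    show "connected (?X' \<inter> fst -` {p})" if "p \<in> X" for p
      using connected_Xprime_fst_fibre[OF that] by (simp add: vimage_def Int_def)
  qed (use assms(1) in auto)
  moreover have "?X' \<inter> fst -` X = ?X'"
    by (auto simp: Xprime_def)
  ultimately show ?thesis
    by simp
qed

lemma Xprime_fst_preimage_subset_sides:
  shows "Xprime X a b c \<inter> fst -` a \<subseteq> X \<times> sideA \<times> {0..1}"
    and "Xprime X a b c \<inter> fst -` b \<subseteq> X \<times> sideB \<times> {0..1}"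
    and "Xprime X a b c \<inter> fst -` c \<subseteq> X \<times> sideC \<times> {0..1}"
proof -
  have face: "v \<in> simplexT \<and> e \<bullet> v = 0"
    if "(p, v, t) \<in> Xprime X a b c" "e \<in> Basis" "e \<bullet> fmap a b c p = 0" for p v t e
    using that inner_Basis_hmap_eq_0[of v t e] rel_frontier_simplexT_subset
    by (auto simp: Xprime_def)
  show "Xprime X a b c \<inter> fst -` a \<subseteq> X \<times> sideA \<times> {0..1}"
    using face[of _ _ _ "(1, 0, 0)"]
    by (fastforce simp: sideA_eq Basis_real_triple fmap_def kappa_def Xprime_def)
  show "Xprime X a b c \<inter> fst -` b \<subseteq> X \<times> sideB \<times> {0..1}"
    using face[of _ _ _ "(0, 1, 0)"]
    by (fastforce simp: sideB_eq Basis_real_triple fmap_def kappa_def Xprime_def)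
  show "Xprime X a b c \<inter> fst -` c \<subseteq> X \<times> sideC \<times> {0..1}"
    using face[of _ _ _ "(0, 0, 1)"]
    by (fastforce simp: sideC_eq Basis_real_triple fmap_def kappa_def Xprime_def)
qed

lemma Xprime_subset_sides: "Xprime X a b c \<subseteq> X \<times> (sideA \<union> sideB \<union> sideC) \<times> {0..1}"
  by (auto simp: Xprime_def rel_frontier_simplexT_eq_sides)

theorem mainTheorem6:
  fixes X a b c :: "'a::metric_space set"
  assumes "compact X" and "connected X" and "X \<noteq> {}"
    and "\<forall>p\<in>X. \<forall>p'\<in>X. dist p p' \<le> 1"
    and "a \<subseteq> X" and "b \<subseteq> X" and "c \<subseteq> X"
    and "a \<noteq> {}" and "b \<noteq> {}" and "c \<noteq> {}"
    and "closed a" and "closed b" and "closed c"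
    and "a \<inter> b \<inter> c = {}"
  shows "compact (Xprime X a b c) \<and> connected (Xprime X a b c) \<and> Xprime X a b c \<noteq> {}
    \<and> continuous_on (Xprime X a b c) fst
    \<and> closed_map (top_of_set (Xprime X a b c)) (top_of_set X) fst
    \<and> fst ` Xprime X a b c = X
    \<and> (\<forall>p\<in>X. connected {w \<in> Xprime X a b c. fst w = p})
    \<and> Xprime X a b c \<inter> fst -` a \<subseteq> Xprime X a b c \<inter> (X \<times> sideA \<times> {0..1})
    \<and> Xprime X a b c \<inter> fst -` b \<subseteq> Xprime X a b c \<inter> (X \<times> sideB \<times> {0..1})
    \<and> Xprime X a b c \<inter> fst -` c \<subseteq> Xprime X a b c \<inter> (X \<times> sideC \<times> {0..1})
    \<and> (Xprime X a b c \<inter> (X \<times> sideA \<times> {0..1})) \<inter> (Xprime X a b c \<inter> (X \<times> sideB \<times> {0..1}))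
        \<inter> (Xprime X a b c \<inter> (X \<times> sideC \<times> {0..1})) = {}
    \<and> (Xprime X a b c \<inter> (X \<times> sideA \<times> {0..1})) \<union> (Xprime X a b c \<inter> (X \<times> sideB \<times> {0..1}))
        \<union> (Xprime X a b c \<inter> (X \<times> sideC \<times> {0..1})) = Xprime X a b c"
proof -
  let ?X' = "Xprime X a b c"
  have pos: "0 < infdist p a + infdist p b + infdist p c" for p
    using assms(8-14) by (intro infdist_sum_pos) auto
  then have in_T: "fmap a b c p \<in> simplexT" for p
    by (rule fmap_in_simplexT)
  have cont: "continuous_on UNIV (fmap a b c)"
    using pos by (rule continuous_on_fmap)
  have cpt: "compact ?X'"
    using assms(1) cont by (rule compact_Xprime)
  have surj: "fst ` ?X' = X"
    using in_T by (rule fst_image_Xprime)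
  show ?thesis
  proof (intro conjI ballI)
    show "connected ?X'"
      using assms(2,1) cont in_T by (rule connected_Xprime)
    show "?X' \<noteq> {}"
      using surj assms(3) by auto
    show "continuous_on ?X' fst"
      by (rule continuous_on_fst[OF continuous_on_id])
    show "closed_map (top_of_set ?X') (top_of_set X) fst"
      using cpt surj by (rule closed_map_fst_compact)
    show "connected {w \<in> ?X'. fst w = p}" if "p \<in> X" for p
      using that by (rule connected_Xprime_fst_fibre)
    show "(?X' \<inter> (X \<times> sideA \<times> {0..1})) \<inter> (?X' \<inter> (X \<times> sideB \<times> {0..1}))
        \<inter> (?X' \<inter> (X \<times> sideC \<times> {0..1})) = {}"
      using sides_Int_empty by auto
    show "(?X' \<inter> (X \<times> sideA \<times> {0..1})) \<union> (?X' \<inter> (X \<times> sideB \<times> {0..1}))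
        \<union> (?X' \<inter> (X \<times> sideC \<times> {0..1})) = ?X'"
      using Xprime_subset_sides[of X a b c] by blast
  qed (use cpt surj Xprime_fst_preimage_subset_sides[of X a b c] in blast)+
qed

end
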